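(* Let $0<a<b<1$ with $a+b=1$, $m\in C^1([0,1])$ non-constant, $c\in C([0,1])$, and assume (H1), (H2) and $m\in S_{\mathcal{D}}$. Let $s_i\to+\infty$ be a sequence with $\lambda(s_i)\to\liminf_{s\to+\infty}\lambda(s)$ and $\varphi_1(s_i;\cdot)\to\varphi_*$ in $C([a,b])$ (such a sequence and limit exist). Then $\varphi_*(a)=\varphi_*(b)=0$.
   Context: Fix an integer $d\ge1$. $\lambda(s)$ denotes the principal eigenvalue of $-\varphi''-\frac{d-1}{r}\varphi'-2s\,m'(r)\varphi'+c(r)\varphi=\lambda\varphi$ on $(0,1)$, $\varphi'(0)=\varphi'(1)=0$; equivalently $\lambda(s)=\min\{\int_0^1 r^{d-1}e^{2sm}(|\varphi'|^2+c\varphi^2)dr:\ \varphi\in H^1((0,1)),\ \int_0^1 r^{d-1}e^{2sm}\varphi^2dr=1\}$; $\varphi_1(s;\cdot)$ is the positive minimizer, normalized by $\int_0^1 r^{d-1}e^{2sm}\varphi_1^2dr=1$. $\lambda^{\mathcal{D}}$ is the principal eigenvalue of $-\varphi''-\frac{d-1}{r}\varphi'+c\varphi=\lambda\varphi$ on $(a,b)$ with Dirichlet boundary conditions. (H1): $m(r)=m(1-r)$ on $[0,1]$ and $m\equiv0$ on $[a,b]$, where $a+b=1$. (H2): $c>0$ on $[0,1]$ and $c(r)>\lambda^{\mathcal{D}}$ for $r\in[0,a]\cup[b,1]$. Step function $\tilde m$: given $\delta\in(0,a)$, constants $0<h<\alpha<\beta<1<\nu$ and $l\in\mathbb{N}$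 with $\sum_{i\ge1}(\alpha^{i+l}+\beta^{i+l})=a-\delta$, put $x_0=\delta$, $x_n=\delta+\sum_{i=1}^n(\alpha^{i+l}+\beta^{i+l})$ ($n\ge1$), $y_n=x_n+\alpha^{n+l+1}$ ($n\ge0$); define $\tilde m(r)=-h^n$ on $[x_n,y_n)$ and $\tilde m(r)=\nu h^n$ on $[y_n,x_{n+1})$ for $n\ge0$, and $\tilde m(r)=\tilde m(1-r)$ for $r\in[b,1-\delta]$. $S_{\mathcal{D}}$: the set of $m\in C^1([0,1])$ such that, for some such $\delta,h,\alpha,\beta,\nu,l$, $m'$ changes sign only finitely many times in $[0,\delta)\cup(1-\delta,1]$ and $m(r)\ge\tilde m(r)$ for all $r\in[\delta,a]\cup[b,1-\delta]$. *)

theory Defs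
  imports "HOL-Analysis.Analysis"
begin

definition C1_on :: "real set \<Rightarrow> (real \<Rightarrow> real) \<Rightarrow> (real \<Rightarrow> real) \<Rightarrow> bool" where
  "C1_on S f f' \<longleftrightarrow> (\<forall>x\<in>S. (f has_real_derivative f' x) (at x within S)) \<and> continuous_on S f'"

definition energy :: "nat \<Rightarrow> (real \<Rightarrow> real) \<Rightarrow> (real \<Rightarrow> real) \<Rightarrow> real \<Rightarrow> (real \<Rightarrow> real) \<Rightarrow> (real \<Rightarrow> real) \<Rightarrow> real" where
  "energy d m c s \<phi> \<phi>' = integral {0..1} (\<lambda>r. r ^ (d - 1) * exp (2 * s * m r) * ((\<phi>' r)\<^sup>2 + c r * (\<phi> r)\<^sup>2))"

definition mass :: "nat \<Rightarrow> (real \<Rightarrow> real) \<Rightarrow> real \<Rightarrow> (real \<Rightarrow> real) \<Rightarrow> real" where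
  "mass d m s \<phi> = integral {0..1} (\<lambda>r. r ^ (d - 1) * exp (2 * s * m r) * (\<phi> r)\<^sup>2)"

text \<open>Principal Neumann eigenvalue lambda(s) (variational characterization; admissible
  functions are C^1 on [0,1], which is dense in H^1 and contains the minimizer).\<close>
definition lam :: "nat \<Rightarrow> (real \<Rightarrow> real) \<Rightarrow> (real \<Rightarrow> real) \<Rightarrow> real \<Rightarrow> real" where
  "lam d m c s = Inf {energy d m c s \<phi> \<phi>' | \<phi> \<phi>'. C1_on {0..1} \<phi> \<phi>' \<and> mass d m s \<phi> = 1}"

text \<open>Principal Dirichlet eigenvalue on (a,b): the eigenvalue having a positive eigenfunction.\<close>
definition lamD :: "nat \<Rightarrow> (real \<Rightarrow> real) \<Rightarrow> real \<Rightarrow> real \<Rightarrow> real" where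
  "lamD d c a b = (THE \<mu>. \<exists>\<phi> \<phi>' \<phi>''. C1_on {a..b} \<phi> \<phi>' \<and> C1_on {a..b} \<phi>' \<phi>'' \<and>
      \<phi> a = 0 \<and> \<phi> b = 0 \<and> (\<forall>x\<in>{a<..<b}. \<phi> x > 0) \<and>
      (\<forall>x\<in>{a..b}. - \<phi>'' x - real (d - 1) / x * \<phi>' x + c x * \<phi> x = \<mu> * \<phi> x))"

definition xseq :: "real \<Rightarrow> real \<Rightarrow> real \<Rightarrow> nat \<Rightarrow> nat \<Rightarrow> real" where
  "xseq \<delta> \<alpha> \<beta> l n = \<delta> + (\<Sum>i=1..n. \<alpha> ^ (i + l) + \<beta> ^ (i + l))"

definition yseq :: "real \<Rightarrow> real \<Rightarrow> real \<Rightarrow> nat \<Rightarrow> nat \<Rightarrow> real" where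
  "yseq \<delta> \<alpha> \<beta> l n = xseq \<delta> \<alpha> \<beta> l n + \<alpha> ^ (n + l + 1)"

definition mtilde_left :: "real \<Rightarrow> real \<Rightarrow> real \<Rightarrow> real \<Rightarrow> real \<Rightarrow> nat \<Rightarrow> real \<Rightarrow> real" where
  "mtilde_left \<delta> h \<alpha> \<beta> \<nu> l r =
     (let n = (THE n. xseq \<delta> \<alpha> \<beta> l n \<le> r \<and> r < xseq \<delta> \<alpha> \<beta> l (Suc n))
      in if r < yseq \<delta> \<alpha> \<beta> l n then - (h ^ n) else \<nu> * h ^ n)"

definition mtilde :: "real \<Rightarrow> real \<Rightarrow> real \<Rightarrow> real \<Rightarrow> real \<Rightarrow> real \<Rightarrow> real \<Rightarrow> nat \<Rightarrow> real \<Rightarrow> real" where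
  "mtilde a b \<delta> h \<alpha> \<beta> \<nu> l r =
     (if r \<in> {\<delta>..<a} then mtilde_left \<delta> h \<alpha> \<beta> \<nu> l r
      else if r \<in> {b<..1 - \<delta>} then mtilde_left \<delta> h \<alpha> \<beta> \<nu> l (1 - r)
      else 0)"

definition finite_sign_changes :: "(real \<Rightarrow> real) \<Rightarrow> real \<Rightarrow> real \<Rightarrow> bool" where
  "finite_sign_changes f p q \<longleftrightarrow> (\<exists>k::nat. \<exists>t::nat \<Rightarrow> real. t 0 = p \<and> t k = q \<and>
     (\<forall>j<k. t j < t (Suc j)) \<and>
     (\<forall>j<k. (\<forall>x\<in>{t j..t (Suc j)}. f x \<ge> 0) \<or> (\<forall>x\<in>{t j..t (Suc j)}. f x \<le> 0)))"

definition in_SD :: "real \<Rightarrow> real \<Rightarrow> (real \<Rightarrow> real) \<Rightarrow> (real \<Rightarrow> real) \<Rightarrow> bool" where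
  "in_SD a b m m' \<longleftrightarrow> (\<exists>\<delta> h \<alpha> \<beta> \<nu> (l::nat).
     0 < \<delta> \<and> \<delta> < a \<and> 0 < h \<and> h < \<alpha> \<and> \<alpha> < \<beta> \<and> \<beta> < 1 \<and> 1 < \<nu> \<and>
     (\<lambda>i. \<alpha> ^ (Suc i + l) + \<beta> ^ (Suc i + l)) sums (a - \<delta>) \<and>
     finite_sign_changes m' 0 \<delta> \<and> finite_sign_changes m' (1 - \<delta>) 1 \<and>
     (\<forall>r\<in>{\<delta>..a} \<union> {b..1 - \<delta>}. m r \<ge> mtilde a b \<delta> h \<alpha> \<beta> \<nu> l r))"

end

theory Submission
  imports Defs
begin

(* The minimiser phi_t = phi_1(t;.) has mass 1 and energy lambda(t), and lambda is bounded
   above because test functions supported in [a,b], where m = 0, do not feel t.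
   Near a, the bound m >= m-tilde gives at every scale n a plateau of length ~ beta^n on which
   m >= nu h^n, followed up to a by a window of length O(beta^n) on which m >= -h^(n+1).
   Choose n with t h^n ~ kappa n.  On the plateau the weight r^(d-1) e^(2tm) is at least
   ~ e^(2 nu kappa n), so mass 1 makes phi_t of size (beta e^(2 nu kappa))^(-n/2) somewhere there;
   on the window the weight is at least ~ e^(-2 kappa n), so the energy bound limits the
   oscillation of phi_t up to a by O((beta e^(2 kappa))^(n/2)).  Since nu > 1, kappa can be chosen
   with beta e^(2 kappa) < 1 < beta e^(2 nu kappa); then phi_t(a) -> 0 as t -> oo, and the
   symmetry of m gives the same at b = 1 - a. *)

section \<open>Weighted integral estimates\<close>

lemma exists_point_sq_le_weighted_integral:
  fixes f w :: "real \<Rightarrow> real"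
  assumes "u < v" and f: "continuous_on {u..v} f"
    and w: "\<And>r. r \<in> {u..v} \<Longrightarrow> w0 \<le> w r" and "0 < w0"
    and int: "(\<lambda>r. w r * (f r)\<^sup>2) integrable_on {u..v}"
    and I: "integral {u..v} (\<lambda>r. w r * (f r)\<^sup>2) \<le> I"
  shows "\<exists>p\<in>{u..v}. (f p)\<^sup>2 \<le> I / (w0 * (v - u))"
proof -
  have "continuous_on {u..v} (\<lambda>r. (f r)\<^sup>2)"
    by (intro continuous_intros f)
  then obtain p where p: "p \<in> {u..v}" and min: "\<And>r. r \<in> {u..v} \<Longrightarrow> (f p)\<^sup>2 \<le> (f r)\<^sup>2"
    using continuous_attains_inf[of "{u..v}" "\<lambda>r. (f r)\<^sup>2"] \<open>u < v\<close> by auto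
  have "w0 * (f p)\<^sup>2 \<le> w r * (f r)\<^sup>2" if "r \<in> {u..v}" for r
    using w[OF that] min[OF that] \<open>0 < w0\<close> by (intro mult_mono) auto
  then have "integral {u..v} (\<lambda>r. w0 * (f p)\<^sup>2) \<le> integral {u..v} (\<lambda>r. w r * (f r)\<^sup>2)"
    by (intro integral_le int) auto
  then have "w0 * (v - u) * (f p)\<^sup>2 \<le> I"
    using I \<open>u < v\<close> by (simp add: mult_ac)
  then have "(f p)\<^sup>2 \<le> I / (w0 * (v - u))"
    using \<open>0 < w0\<close> \<open>u < v\<close> by (simp add: field_simps)
  with p show ?thesis by blast
qed

lemma two_abs_le_mult_sq_add_inverse:
  fixes q z :: real
  assumes "0 < q"
  shows "2 * \<bar>z\<bar> \<le> q * z\<^sup>2 + 1 / q"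
proof -
  have "0 \<le> (q * \<bar>z\<bar> - 1)\<^sup>2 / q" using assms by simp
  also have "\<dots> = q * z\<^sup>2 - 2 * \<bar>z\<bar> + 1 / q"
    using assms by (simp add: field_simps power2_eq_square)
  finally show ?thesis by simp
qed

(* The AM-GM form of the Cauchy-Schwarz bound sqrt (A * B * (v - u)); the caller chooses theta. *)
lemma abs_diff_le_weighted_energy:
  fixes f f' w :: "real \<Rightarrow> real"
  assumes "u \<le> v"
    and f': "\<And>x. x \<in> {u..v} \<Longrightarrow> (f has_real_derivative f' x) (at x within {u..v})"
    and f'_cont: "continuous_on {u..v} f'" and w_cont: "continuous_on {u..v} w"
    and w_pos: "\<And>x. x \<in> {u..v} \<Longrightarrow> 0 < w x"
    and B: "\<And>x. x \<in> {u..v} \<Longrightarrow> 1 / w x \<le> B"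
    and A: "integral {u..v} (\<lambda>x. w x * (f' x)\<^sup>2) \<le> A"
    and "0 < \<theta>"
  shows "\<bar>f v - f u\<bar> \<le> (\<theta> * A + B * (v - u) / \<theta>) / 2"
proof -
  have "(f' has_integral f v - f u) {u..v}"
    by (rule fundamental_theorem_of_calculus[OF \<open>u \<le> v\<close>])
       (use f' in \<open>auto simp: has_real_derivative_iff_has_vector_derivative\<close>)
  then have ftc: "f v - f u = integral {u..v} f'"
    by (rule integral_unique[symmetric])
  have int: "(\<lambda>x. w x * (f' x)\<^sup>2) integrable_on {u..v}"
    by (intro integrable_continuous_interval continuous_intros w_cont f'_cont)
  have "\<bar>f' x\<bar> \<le> (\<theta> * (w x * (f' x)\<^sup>2) + B / \<theta>) / 2" if x: "x \<in> {u..v}" for x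
  proof -
    have "1 / (\<theta> * w x) = (1 / w x) / \<theta>" by simp
    also have "\<dots> \<le> B / \<theta>"
      using B[OF x] \<open>0 < \<theta>\<close> by (intro divide_right_mono) auto
    finally have "1 / (\<theta> * w x) \<le> B / \<theta>" .
    then show ?thesis
      using two_abs_le_mult_sq_add_inverse[of "\<theta> * w x" "f' x"] w_pos[OF x] \<open>0 < \<theta>\<close>
      by (simp add: mult_ac)
  qed
  then have "\<bar>f v - f u\<bar> \<le> integral {u..v} (\<lambda>x. (\<theta> * (w x * (f' x)\<^sup>2) + B / \<theta>) / 2)"
    unfolding ftc real_norm_def[symmetric]
    by (intro integral_norm_bound_integral integrable_continuous_interval
        continuous_intros f'_cont w_cont) auto
  also have "\<dots> = (\<theta> * integral {u..v} (\<lambda>x. w x * (f' x)\<^sup>2) + B * (v - u) / \<theta>) / 2"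
    using int \<open>u \<le> v\<close>
    by (simp add: integral_divide integral_add integrable_on_mult_right integrable_const_ivl)
  also have "\<dots> \<le> (\<theta> * A + B * (v - u) / \<theta>) / 2"
    using A \<open>0 < \<theta>\<close> by simp
  finally show ?thesis .
qed

definition weight :: "nat \<Rightarrow> (real \<Rightarrow> real) \<Rightarrow> real \<Rightarrow> real \<Rightarrow> real" where
  "weight d m s r = r ^ (d - 1) * exp (2 * s * m r)"

lemma mass_eq_weight: "mass d m s \<phi> = integral {0..1} (\<lambda>r. weight d m s r * (\<phi> r)\<^sup>2)"
  by (simp add: mass_def weight_def)

lemma energy_eq_weight:
  "energy d m c s \<phi> \<phi>' = integral {0..1} (\<lambda>r. weight d m s r * ((\<phi>' r)\<^sup>2 + c r * (\<phi> r)\<^sup>2))"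
  by (simp add: energy_def weight_def)

lemma weight_nonneg: "0 \<le> r \<Longrightarrow> 0 \<le> weight d m s r"
  by (simp add: weight_def)

lemma continuous_on_weight [continuous_intros]:
  "continuous_on S m \<Longrightarrow> continuous_on S (weight d m s)"
  unfolding weight_def by (intro continuous_intros)

lemma weight_lower_bound:
  assumes "0 \<le> s" "0 < \<delta>" "\<delta> \<le> r" "P \<le> m r"
  shows "\<delta> ^ (d - 1) * exp (2 * s * P) \<le> weight d m s r"
  unfolding weight_def using assms
  by (intro mult_mono power_mono) (auto intro: mult_left_mono)

lemma weighted_sq_integral_le_mass:
  assumes "continuous_on {0..1} \<phi>" "continuous_on {0..1} m" "{u..v} \<subseteq> {0..1}"
  shows "integral {u..v} (\<lambda>r. weight d m s r * (\<phi> r)\<^sup>2) \<le> mass d m s \<phi>"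
proof -
  have int: "(\<lambda>r. weight d m s r * (\<phi> r)\<^sup>2) integrable_on {0..1}"
    using assms(1,2) by (intro integrable_continuous_interval continuous_intros)
  show ?thesis
    unfolding mass_eq_weight
    by (rule integral_subset_le[OF assms(3) integrable_on_subinterval[OF int assms(3)] int])
       (auto intro!: mult_nonneg_nonneg weight_nonneg)
qed

lemma weighted_deriv_sq_integral_le_energy:
  assumes "continuous_on {0..1} \<phi>" "continuous_on {0..1} \<phi>'"
    and "continuous_on {0..1} m" "continuous_on {0..1} c" and c_pos: "\<forall>r\<in>{0..1}. c r > 0"
    and sub: "{u..v} \<subseteq> {0..1}"
  shows "integral {u..v} (\<lambda>r. weight d m s r * (\<phi>' r)\<^sup>2) \<le> energy d m c s \<phi> \<phi>'"
proof -
  let ?e = "\<lambda>r. weight d m s r * ((\<phi>' r)\<^sup>2 + c r * (\<phi> r)\<^sup>2)"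
  have int_e: "?e integrable_on {0..1}"
    using assms(1-4) by (intro integrable_continuous_interval continuous_intros)
  have int_d: "(\<lambda>r. weight d m s r * (\<phi>' r)\<^sup>2) integrable_on {0..1}"
    using assms(2,3) by (intro integrable_continuous_interval continuous_intros)
  have "0 \<le> weight d m s r * (c r * (\<phi> r)\<^sup>2)" if "r \<in> {0..1}" for r
    using that c_pos by (intro mult_nonneg_nonneg weight_nonneg) (auto simp: less_imp_le)
  then have le: "weight d m s r * (\<phi>' r)\<^sup>2 \<le> ?e r" and nonneg: "0 \<le> ?e r"
    if "r \<in> {0..1}" for r
    using that weight_nonneg[of r d m s] by (auto simp: distrib_left)
  have "integral {u..v} (\<lambda>r. weight d m s r * (\<phi>' r)\<^sup>2) \<le> integral {u..v} ?e"
    using sub le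
    by (intro integral_le integrable_on_subinterval[OF int_d sub] integrable_on_subinterval[OF int_e sub])
       auto
  also have "\<dots> \<le> energy d m c s \<phi> \<phi>'"
    unfolding energy_eq_weight
    by (rule integral_subset_le[OF sub integrable_on_subinterval[OF int_e sub] int_e]) (use nonneg in auto)
  finally show ?thesis .
qed

lemma exists_small_point_of_mass:
  assumes \<phi>: "continuous_on {0..1} \<phi>" and m: "continuous_on {0..1} m" and mass: "mass d m s \<phi> = 1"
    and "0 \<le> s" "0 < \<delta>" "u < v" "\<delta> \<le> u" "v \<le> 1"
    and P: "\<And>r. r \<in> {u..v} \<Longrightarrow> P \<le> m r"
  shows "\<exists>p\<in>{u..v}. \<phi> p \<le> sqrt (1 / (\<delta> ^ (d - 1) * exp (2 * s * P) * (v - u)))"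
proof -
  have sub: "{u..v} \<subseteq> {0..1}" using assms by auto
  have "\<exists>p\<in>{u..v}. (\<phi> p)\<^sup>2 \<le> 1 / (\<delta> ^ (d - 1) * exp (2 * s * P) * (v - u))"
  proof (rule exists_point_sq_le_weighted_integral)
    show "(\<lambda>r. weight d m s r * (\<phi> r)\<^sup>2) integrable_on {u..v}"
      by (intro integrable_continuous_interval continuous_intros continuous_on_subset[OF _ sub] \<phi> m)
    show "integral {u..v} (\<lambda>r. weight d m s r * (\<phi> r)\<^sup>2) \<le> 1"
      using weighted_sq_integral_le_mass[OF \<phi> m sub, of d s] mass by simp
  next
    show "continuous_on {u..v} \<phi>" using \<phi> sub by (rule continuous_on_subset)
    show "\<delta> ^ (d - 1) * exp (2 * s * P) \<le> weight d m s r" if "r \<in> {u..v}" for r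
      using that assms by (intro weight_lower_bound) auto
  qed (use assms \<open>0 < \<delta>\<close> in simp_all)
  then show ?thesis using real_le_rsqrt by blast
qed

lemma oscillation_le_energy:
  assumes C1: "C1_on {0..1} \<phi> \<phi>'"
    and m: "continuous_on {0..1} m" and c: "continuous_on {0..1} c" and c_pos: "\<forall>r\<in>{0..1}. c r > 0"
    and "0 \<le> s" "0 < \<delta>" and energy: "energy d m c s \<phi> \<phi>' \<le> \<Lambda>"
    and jk: "{j..k} \<subseteq> {\<delta>..1}" and Q: "\<And>r. r \<in> {j..k} \<Longrightarrow> - Q \<le> m r"
    and xy: "j \<le> x" "x \<le> y" "y \<le> k" and "0 < \<theta>"
  shows "\<bar>\<phi> y - \<phi> x\<bar> \<le> (\<theta> * \<Lambda> + exp (2 * s * Q) / \<delta> ^ (d - 1) * (k - j) / \<theta>) / 2"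
proof -
  have der: "\<And>r. r \<in> {0..1} \<Longrightarrow> (\<phi> has_real_derivative \<phi>' r) (at r within {0..1})"
    and \<phi>'_cont: "continuous_on {0..1} \<phi>'"
    using C1 by (auto simp: C1_on_def)
  have \<phi>_cont: "continuous_on {0..1} \<phi>"
    by (rule DERIV_continuous_on[OF der])
  have sub: "{x..y} \<subseteq> {0..1}" and sub': "{x..y} \<subseteq> {j..k}"
    using jk xy \<open>0 < \<delta>\<close> by auto
  have w_lower: "\<delta> ^ (d - 1) * exp (- 2 * s * Q) \<le> weight d m s r" if "r \<in> {x..y}" for r
    using weight_lower_bound[of s \<delta> r "- Q" m d] that sub' jk Q assms(5,6) by auto
  have w_pos: "0 < weight d m s r" if "r \<in> {x..y}" for r
    using \<open>0 < \<delta>\<close> by (intro less_le_trans[OF _ w_lower[OF that]]) simp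
  have "\<bar>\<phi> y - \<phi> x\<bar> \<le> (\<theta> * \<Lambda> + exp (2 * s * Q) / \<delta> ^ (d - 1) * (y - x) / \<theta>) / 2"
  proof (rule abs_diff_le_weighted_energy[OF \<open>x \<le> y\<close> _ _ _ w_pos _ _ \<open>0 < \<theta>\<close>])
    show "(\<phi> has_real_derivative \<phi>' r) (at r within {x..y})" if "r \<in> {x..y}" for r
      using der[of r] that sub by (auto intro: DERIV_subset)
    show "continuous_on {x..y} \<phi>'"
      by (rule continuous_on_subset[OF \<phi>'_cont sub])
    show "continuous_on {x..y} (weight d m s)"
      by (rule continuous_on_weight[OF continuous_on_subset[OF m sub]])
    show "1 / weight d m s r \<le> exp (2 * s * Q) / \<delta> ^ (d - 1)" if "r \<in> {x..y}" for r
    proof -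
      have "1 / weight d m s r \<le> 1 / (\<delta> ^ (d - 1) * exp (- 2 * s * Q))"
        using w_lower[OF that] w_pos[OF that] \<open>0 < \<delta>\<close> by (intro divide_left_mono) auto
      also have "\<dots> = exp (2 * s * Q) / \<delta> ^ (d - 1)"
        by (simp add: exp_minus divide_inverse)
      finally show ?thesis .
    qed
    show "integral {x..y} (\<lambda>r. weight d m s r * (\<phi>' r)\<^sup>2) \<le> \<Lambda>"
      using order_trans[OF weighted_deriv_sq_integral_le_energy[OF \<phi>_cont \<phi>'_cont m c c_pos sub] energy] .
  qed
  also have "\<dots> \<le> (\<theta> * \<Lambda> + exp (2 * s * Q) / \<delta> ^ (d - 1) * (k - j) / \<theta>) / 2"
  proof -
    have "exp (2 * s * Q) / \<delta> ^ (d - 1) * (y - x) / \<theta> \<le> exp (2 * s * Q) / \<delta> ^ (d - 1) * (k - j) / \<theta>"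
      using xy \<open>0 < \<theta>\<close> \<open>0 < \<delta>\<close> by (intro divide_right_mono mult_left_mono) auto
    then show ?thesis by (rule divide_right_mono[OF add_left_mono]) simp
  qed
  finally show ?thesis .
qed

lemma endpoint_estimate:
  assumes C1: "C1_on {0..1} \<phi> \<phi>'"
    and m: "continuous_on {0..1} m" and c: "continuous_on {0..1} c" and c_pos: "\<forall>r\<in>{0..1}. c r > 0"
    and "0 \<le> s" "0 < \<delta>" and mass: "mass d m s \<phi> = 1" and energy: "energy d m c s \<phi> \<phi>' \<le> \<Lambda>"
    and "u < v" "{u..v} \<subseteq> {j..k}" "e \<in> {j..k}" "{j..k} \<subseteq> {\<delta>..1}"
    and m_ge_P: "\<And>r. r \<in> {u..v} \<Longrightarrow> P \<le> m r" and m_ge_Q: "\<And>r. r \<in> {j..k} \<Longrightarrow> - Q \<le> m r"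
    and "0 < \<theta>"
  shows "\<phi> e \<le> sqrt (1 / (\<delta> ^ (d - 1) * exp (2 * s * P) * (v - u)))
              + (\<theta> * \<Lambda> + exp (2 * s * Q) / \<delta> ^ (d - 1) * (k - j) / \<theta>) / 2"
proof -
  have \<phi>: "continuous_on {0..1} \<phi>"
    using C1 by (auto simp: C1_on_def intro: DERIV_continuous_on)
  have "\<delta> \<le> u" "v \<le> 1"
    using assms(9,10,12) by auto
  then obtain p where p: "p \<in> {u..v}"
    and small: "\<phi> p \<le> sqrt (1 / (\<delta> ^ (d - 1) * exp (2 * s * P) * (v - u)))"
    using exists_small_point_of_mass[OF \<phi> m mass \<open>0 \<le> s\<close> \<open>0 < \<delta>\<close> \<open>u < v\<close> _ _ m_ge_P] by blast
  have "\<bar>\<phi> (max p e) - \<phi> (min p e)\<bar>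
      \<le> (\<theta> * \<Lambda> + exp (2 * s * Q) / \<delta> ^ (d - 1) * (k - j) / \<theta>) / 2"
    using p assms(10-12)
    by (intro oscillation_le_energy[OF C1 m c c_pos \<open>0 \<le> s\<close> \<open>0 < \<delta>\<close> energy _ m_ge_Q _ _ _ \<open>0 < \<theta>\<close>]) auto
  moreover have "\<phi> e - \<phi> p \<le> \<bar>\<phi> (max p e) - \<phi> (min p e)\<bar>"
    by (cases "p \<le> e") (auto simp: max_def min_def)
  ultimately show ?thesis using small by linarith
qed

section \<open>Decay at an endpoint guarded by barriers\<close>

(* The windows stay inside [delta, 1 - delta]: there r^(d-1) >= delta^(d-1), and the notion is
   invariant under r \<mapsto> 1 - r. *)
definition barriers_near ::
    "(real \<Rightarrow> real) \<Rightarrow> real \<Rightarrow> real \<Rightarrow> real \<Rightarrow> real \<Rightarrow> real \<Rightarrow> real \<Rightarrow> real \<Rightarrow> bool" where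
  "barriers_near m e \<delta> h \<nu> \<beta> \<gamma> D \<longleftrightarrow> (\<forall>n. \<exists>u v j k.
     \<gamma> * \<beta> ^ n \<le> v - u \<and> {u..v} \<subseteq> {j..k} \<and> e \<in> {j..k} \<and> {j..k} \<subseteq> {\<delta>..1 - \<delta>} \<and>
     k - j \<le> D * \<beta> ^ n \<and> (\<forall>r\<in>{u..v}. \<nu> * h ^ n \<le> m r) \<and> (\<forall>r\<in>{j..k}. - (h ^ Suc n) \<le> m r))"

lemma barriers_near_reflect:
  assumes sym: "\<forall>r\<in>{0..1}. m r = m (1 - r)" and "0 < \<delta>"
    and "barriers_near m e \<delta> h \<nu> \<beta> \<gamma> D"
  shows "barriers_near m (1 - e) \<delta> h \<nu> \<beta> \<gamma> D"
  unfolding barriers_near_def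
proof
  fix n
  obtain u v j k where gap: "\<gamma> * \<beta> ^ n \<le> v - u" and sub: "{u..v} \<subseteq> {j..k}" and "e \<in> {j..k}"
    and jk: "{j..k} \<subseteq> {\<delta>..1 - \<delta>}" and width: "k - j \<le> D * \<beta> ^ n"
    and P: "\<forall>r\<in>{u..v}. \<nu> * h ^ n \<le> m r" and Q: "\<forall>r\<in>{j..k}. - (h ^ Suc n) \<le> m r"
    using assms(3) unfolding barriers_near_def by blast
  have gap': "\<gamma> * \<beta> ^ n \<le> (1 - u) - (1 - v)" and width': "(1 - j) - (1 - k) \<le> D * \<beta> ^ n"
    and e': "1 - e \<in> {1 - k..1 - j}"
    using gap width \<open>e \<in> {j..k}\<close> by auto
  have sub': "{1 - v..1 - u} \<subseteq> {1 - k..1 - j}" and jk': "{1 - k..1 - j} \<subseteq> {\<delta>..1 - \<delta>}"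
    using image_mono[OF sub, of "(-) 1"] image_mono[OF jk, of "(-) 1"] by simp_all
  have m_reflect: "m r = m (1 - r)" if "r \<in> {1 - k..1 - j}" for r
  proof -
    have "r \<in> {0..1}" using subsetD[OF jk' that] \<open>0 < \<delta>\<close> by auto
    then show ?thesis using sym by blast
  qed
  have P': "\<forall>r\<in>{1 - v..1 - u}. \<nu> * h ^ n \<le> m r"
  proof
    fix r assume r: "r \<in> {1 - v..1 - u}"
    then have "1 - r \<in> {u..v}" by auto
    then show "\<nu> * h ^ n \<le> m r" using P m_reflect[OF subsetD[OF sub' r]] by simp
  qed
  have Q': "\<forall>r\<in>{1 - k..1 - j}. - (h ^ Suc n) \<le> m r"
  proof
    fix r assume r: "r \<in> {1 - k..1 - j}"
    then have "1 - r \<in> {j..k}" by auto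
    then show "- (h ^ Suc n) \<le> m r" using Q m_reflect[OF r] by simp
  qed
  show "\<exists>u v j k. \<gamma> * \<beta> ^ n \<le> v - u \<and> {u..v} \<subseteq> {j..k} \<and> 1 - e \<in> {j..k} \<and>
      {j..k} \<subseteq> {\<delta>..1 - \<delta>} \<and> k - j \<le> D * \<beta> ^ n \<and> (\<forall>r\<in>{u..v}. \<nu> * h ^ n \<le> m r) \<and>
      (\<forall>r\<in>{j..k}. - (h ^ Suc n) \<le> m r)"
    by (rule exI[of _ "1 - v"], rule exI[of _ "1 - u"], rule exI[of _ "1 - k"], rule exI[of _ "1 - j"])
       (intro conjI gap' sub' e' jk' width' P' Q')
qed

definition scale_index :: "real \<Rightarrow> real \<Rightarrow> real \<Rightarrow> nat" where
  "scale_index h \<kappa> t = (LEAST n. t * h ^ Suc n \<le> \<kappa> * real n)"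

lemma scale_index_exists:
  assumes "0 < h" "h < 1" "0 < \<kappa>"
  shows "\<exists>n. t * h ^ Suc n \<le> \<kappa> * real n"
proof -
  have "(\<lambda>n. t * h ^ Suc n) \<longlonglongrightarrow> t * 0"
    using assms by (intro tendsto_mult tendsto_const LIMSEQ_power_zero LIMSEQ_Suc) auto
  then have "\<forall>\<^sub>F n in sequentially. t * h ^ Suc n < \<kappa>"
    using assms by (intro order_tendstoD) auto
  then obtain n where "\<forall>i\<ge>n. t * h ^ Suc i < \<kappa>"
    unfolding eventually_sequentially by blast
  then have "t * h ^ Suc (Suc n) < \<kappa>" by (meson le_SucI order_refl)
  moreover have "\<kappa> \<le> \<kappa> * real (Suc n)" using assms by simp
  ultimately show ?thesis by (intro exI[of _ "Suc n"]) linarith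
qed

lemma scale_index_le:
  assumes "0 < h" "h < 1" "0 < \<kappa>"
  shows "t * h ^ Suc (scale_index h \<kappa> t) \<le> \<kappa> * real (scale_index h \<kappa> t)"
  unfolding scale_index_def by (rule LeastI_ex[OF scale_index_exists[OF assms]])

lemma scale_index_gt:
  assumes "0 < \<kappa>" "0 \<le> t"
  shows "\<kappa> * (real (scale_index h \<kappa> t) - 1) < t * h ^ scale_index h \<kappa> t"
proof (cases "scale_index h \<kappa> t")
  case 0
  then show ?thesis using assms by simp
next
  case (Suc n)
  then have "\<not> t * h ^ Suc n \<le> \<kappa> * real n"
    unfolding scale_index_def by (metis lessI not_less_Least)
  then show ?thesis using Suc by simp
qed

lemma filterlim_scale_index:
  assumes "0 < h" "h < 1" "0 < \<kappa>"
  shows "filterlim (scale_index h \<kappa>) at_top at_top"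
  unfolding filterlim_at_top
proof
  fix Z :: nat
  show "\<forall>\<^sub>F t in at_top. Z \<le> scale_index h \<kappa> t"
    using eventually_gt_at_top[of "\<kappa> * real Z / h ^ Z"] eventually_ge_at_top[of 0]
  proof eventually_elim
    case (elim t)
    show ?case
    proof (rule ccontr)
      let ?n = "scale_index h \<kappa> t"
      assume "\<not> Z \<le> ?n"
      then have "Suc ?n \<le> Z" by simp
      then have "t * h ^ Z \<le> t * h ^ Suc ?n"
        using assms elim by (intro mult_left_mono power_decreasing) auto
      also have "\<dots> \<le> \<kappa> * real ?n" by (rule scale_index_le[OF assms])
      also have "\<dots> \<le> \<kappa> * real Z" using \<open>Suc ?n \<le> Z\<close> assms by simp
      finally have "t \<le> \<kappa> * real Z / h ^ Z"
        using assms by (simp add: field_simps)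
      with elim show False by simp
    qed
  qed
qed

lemma exists_rate_between:
  fixes \<beta> \<nu> :: real
  assumes "0 < \<beta>" "\<beta> < 1" "1 < \<nu>"
  shows "\<exists>\<kappa>>0. \<beta> * exp (2 * \<kappa>) < 1 \<and> 1 < \<beta> * exp (2 * \<nu> * \<kappa>)"
proof -
  define L where "L = - ln \<beta>"
  have "0 < L" "\<beta> = exp (- L)"
    using assms by (simp_all add: L_def)
  define \<kappa> where "\<kappa> = L * (1 + \<nu>) / (4 * \<nu>)"
  have "2 * \<kappa> - L = - (L * (\<nu> - 1) / (2 * \<nu>))" "2 * \<nu> * \<kappa> - L = L * (\<nu> - 1) / 2"
    using assms by (simp_all add: \<kappa>_def field_simps)
  moreover have "0 < L * (\<nu> - 1) / (2 * \<nu>)" "0 < L * (\<nu> - 1) / 2"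
    using \<open>0 < L\<close> assms by simp_all
  ultimately have "\<beta> * exp (2 * \<kappa>) < 1" "1 < \<beta> * exp (2 * \<nu> * \<kappa>)"
    using \<open>\<beta> = exp (- L)\<close> by (simp_all add: mult_exp_exp)
  moreover have "0 < \<kappa>" using \<open>0 < L\<close> assms by (simp add: \<kappa>_def)
  ultimately show ?thesis by blast
qed

lemma mass_term_decay:
  assumes "0 < c0" "0 < \<gamma>" "0 < \<beta>" "0 < \<nu>"
    and scale: "\<kappa> * (real n - 1) < t * h ^ n" and gap: "\<gamma> * \<beta> ^ n \<le> w"
  shows "1 / (c0 * exp (2 * t * (\<nu> * h ^ n)) * w)
    \<le> exp (2 * \<nu> * \<kappa>) / (c0 * \<gamma>) * (1 / (\<beta> * exp (2 * \<nu> * \<kappa>))) ^ n"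
proof -
  let ?E = "exp (2 * \<nu> * (\<kappa> * (real n - 1)))"
  have "2 * \<nu> * (\<kappa> * (real n - 1)) \<le> 2 * \<nu> * (t * h ^ n)"
    using scale \<open>0 < \<nu>\<close> by (intro mult_left_mono) auto
  then have E: "?E \<le> exp (2 * t * (\<nu> * h ^ n))"
    by (simp add: mult_ac)
  have pos: "0 < \<gamma> * \<beta> ^ n" using assms by simp
  with gap have "0 < w" by linarith
  have "\<gamma> * \<beta> ^ n * ?E \<le> w * exp (2 * t * (\<nu> * h ^ n))"
    using \<open>0 < w\<close> by (intro mult_mono[OF gap E]) auto
  then have "c0 * (\<gamma> * \<beta> ^ n) * ?E \<le> c0 * exp (2 * t * (\<nu> * h ^ n)) * w"
    using \<open>0 < c0\<close> mult_left_mono[of _ _ c0] by (simp add: mult_ac)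
  then have "1 / (c0 * exp (2 * t * (\<nu> * h ^ n)) * w) \<le> 1 / (c0 * (\<gamma> * \<beta> ^ n) * ?E)"
    using pos \<open>0 < c0\<close> \<open>0 < w\<close> by (intro divide_left_mono) auto
  also have "?E = exp (2 * \<nu> * \<kappa>) ^ n / exp (2 * \<nu> * \<kappa>)"
    by (simp add: exp_of_nat_mult[symmetric] exp_diff[symmetric] algebra_simps)
  also have "1 / (c0 * (\<gamma> * \<beta> ^ n) * (exp (2 * \<nu> * \<kappa>) ^ n / exp (2 * \<nu> * \<kappa>)))
      = exp (2 * \<nu> * \<kappa>) / (c0 * \<gamma>) * (1 / (\<beta> * exp (2 * \<nu> * \<kappa>))) ^ n"
    by (simp add: power_mult_distrib power_one_over field_simps)
  finally show ?thesis .
qed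

lemma oscillation_term_decay:
  assumes "0 < c0" "0 \<le> \<beta>" and scale: "t * h ^ Suc n \<le> \<kappa> * real n"
    and "0 \<le> w" "w \<le> D * \<beta> ^ n"
  shows "exp (2 * t * h ^ Suc n) / c0 * w \<le> D / c0 * (\<beta> * exp (2 * \<kappa>)) ^ n"
proof -
  have "exp (2 * t * h ^ Suc n) \<le> exp (2 * \<kappa>) ^ n"
    using scale by (simp add: exp_of_nat_mult[symmetric] mult_ac)
  then have "exp (2 * t * h ^ Suc n) * w \<le> exp (2 * \<kappa>) ^ n * (D * \<beta> ^ n)"
    using assms by (intro mult_mono) auto
  then show ?thesis
    using \<open>0 < c0\<close> by (simp add: power_mult_distrib divide_right_mono mult_ac)
qed

lemma barriers_near_value_bound:
  assumes barriers: "barriers_near m e \<delta> h \<nu> \<beta> \<gamma> D"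
    and "0 < \<delta>" "0 < \<beta>" "0 < \<nu>" "0 < \<gamma>"
    and m: "continuous_on {0..1} m" and c: "continuous_on {0..1} c" and c_pos: "\<forall>r\<in>{0..1}. c r > 0"
    and C1: "C1_on {0..1} \<phi> \<phi>'" and mass: "mass d m t \<phi> = 1" and energy: "energy d m c t \<phi> \<phi>' \<le> \<Lambda>"
    and "0 \<le> t" and scale: "\<kappa> * (real n - 1) < t * h ^ n" "t * h ^ Suc n \<le> \<kappa> * real n"
  shows "\<phi> e \<le> sqrt (exp (2 * \<nu> * \<kappa>) / (\<delta> ^ (d - 1) * \<gamma>) * (1 / (\<beta> * exp (2 * \<nu> * \<kappa>))) ^ n)
              + (\<Lambda> + D / \<delta> ^ (d - 1)) * sqrt (\<beta> * exp (2 * \<kappa>)) ^ n / 2"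
proof -
  obtain u v j k where gap: "\<gamma> * \<beta> ^ n \<le> v - u" and sub: "{u..v} \<subseteq> {j..k}" and e: "e \<in> {j..k}"
    and jk: "{j..k} \<subseteq> {\<delta>..1 - \<delta>}" and width: "k - j \<le> D * \<beta> ^ n"
    and P: "\<forall>r\<in>{u..v}. \<nu> * h ^ n \<le> m r" and Q: "\<forall>r\<in>{j..k}. - (h ^ Suc n) \<le> m r"
    using barriers unfolding barriers_near_def by blast
  have "0 < \<gamma> * \<beta> ^ n" using assms by simp
  with gap have "u < v" by linarith
  define \<theta> where "\<theta> = sqrt (\<beta> * exp (2 * \<kappa>)) ^ n"
  have "0 < \<theta>" using \<open>0 < \<beta>\<close> by (simp add: \<theta>_def)
  have \<theta>_sq: "\<theta>\<^sup>2 = (\<beta> * exp (2 * \<kappa>)) ^ n"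
    using \<open>0 < \<beta>\<close> by (simp add: \<theta>_def power_mult_distrib[symmetric] power2_eq_square
        flip: power_mult_distrib real_sqrt_mult)
  have estimate: "\<phi> e \<le> sqrt (1 / (\<delta> ^ (d - 1) * exp (2 * t * (\<nu> * h ^ n)) * (v - u)))
      + (\<theta> * \<Lambda> + exp (2 * t * h ^ Suc n) / \<delta> ^ (d - 1) * (k - j) / \<theta>) / 2"
    using jk P Q \<open>0 < \<delta>\<close>
    by (intro endpoint_estimate[OF C1 m c c_pos \<open>0 \<le> t\<close> \<open>0 < \<delta>\<close> mass energy \<open>u < v\<close> sub e
        _ _ _ \<open>0 < \<theta>\<close>]) auto
  have mass_term: "sqrt (1 / (\<delta> ^ (d - 1) * exp (2 * t * (\<nu> * h ^ n)) * (v - u)))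
      \<le> sqrt (exp (2 * \<nu> * \<kappa>) / (\<delta> ^ (d - 1) * \<gamma>) * (1 / (\<beta> * exp (2 * \<nu> * \<kappa>))) ^ n)"
    using assms by (intro real_sqrt_le_mono mass_term_decay[OF _ _ _ _ scale(1) gap]) auto
  have "exp (2 * t * h ^ Suc n) / \<delta> ^ (d - 1) * (k - j) \<le> D / \<delta> ^ (d - 1) * \<theta>\<^sup>2"
    unfolding \<theta>_sq using e width \<open>0 < \<delta>\<close> \<open>0 < \<beta>\<close>
    by (intro oscillation_term_decay[OF _ _ scale(2)]) auto
  then have "exp (2 * t * h ^ Suc n) / \<delta> ^ (d - 1) * (k - j) / \<theta> \<le> D / \<delta> ^ (d - 1) * \<theta>\<^sup>2 / \<theta>"
    using \<open>0 < \<theta>\<close> by (intro divide_right_mono) auto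
  also have "\<dots> = D / \<delta> ^ (d - 1) * \<theta>"
    using \<open>0 < \<theta>\<close> by (simp add: power2_eq_square)
  finally have oscillation_term: "exp (2 * t * h ^ Suc n) / \<delta> ^ (d - 1) * (k - j) / \<theta> \<le> D / \<delta> ^ (d - 1) * \<theta>" .
  have "\<phi> e \<le> sqrt (exp (2 * \<nu> * \<kappa>) / (\<delta> ^ (d - 1) * \<gamma>) * (1 / (\<beta> * exp (2 * \<nu> * \<kappa>))) ^ n)
      + (\<theta> * \<Lambda> + D / \<delta> ^ (d - 1) * \<theta>) / 2"
    using order_trans[OF estimate add_mono[OF mass_term divide_right_mono[OF add_left_mono[OF oscillation_term]]]]
    by simp
  then show ?thesis
    by (simp add: \<theta>_def algebra_simps add_divide_distrib)
qed

lemma barriers_near_decay: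
  fixes \<phi> \<phi>' :: "real \<Rightarrow> real \<Rightarrow> real"
  assumes barriers: "barriers_near m e \<delta> h \<nu> \<beta> \<gamma> D"
    and "0 < \<delta>" "0 < h" "h < 1" "0 < \<beta>" "\<beta> < 1" "1 < \<nu>" "0 < \<gamma>"
    and m: "continuous_on {0..1} m" and c: "continuous_on {0..1} c" and c_pos: "\<forall>r\<in>{0..1}. c r > 0"
    and C1: "\<And>t. C1_on {0..1} (\<phi> t) (\<phi>' t)" and mass: "\<And>t. mass d m t (\<phi> t) = 1"
    and energy: "\<And>t. energy d m c t (\<phi> t) (\<phi>' t) \<le> \<Lambda>" and nonneg: "\<And>t. 0 \<le> \<phi> t e"
  shows "((\<lambda>t. \<phi> t e) \<longlongrightarrow> 0) at_top"
proof -
  obtain \<kappa> where "0 < \<kappa>" and \<rho>\<^sub>2: "\<beta> * exp (2 * \<kappa>) < 1" and \<rho>\<^sub>1: "1 < \<beta> * exp (2 * \<nu> * \<kappa>)"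
    using exists_rate_between[OF \<open>0 < \<beta>\<close> \<open>\<beta> < 1\<close> \<open>1 < \<nu>\<close>] by blast
  define G where "G n = sqrt (exp (2 * \<nu> * \<kappa>) / (\<delta> ^ (d - 1) * \<gamma>) * (1 / (\<beta> * exp (2 * \<nu> * \<kappa>))) ^ n)
      + (\<Lambda> + D / \<delta> ^ (d - 1)) * sqrt (\<beta> * exp (2 * \<kappa>)) ^ n / 2" for n
  have "G \<longlonglongrightarrow> sqrt (exp (2 * \<nu> * \<kappa>) / (\<delta> ^ (d - 1) * \<gamma>) * 0) + (\<Lambda> + D / \<delta> ^ (d - 1)) * 0 / 2"
    unfolding G_def using \<rho>\<^sub>1 \<rho>\<^sub>2 \<open>0 < \<beta>\<close>
    by (intro tendsto_intros LIMSEQ_power_zero) (auto simp: real_sqrt_less_iff)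
  then have "G \<longlonglongrightarrow> 0" by simp
  then have G_lim: "((\<lambda>t. G (scale_index h \<kappa> t)) \<longlongrightarrow> 0) at_top"
    using filterlim_compose filterlim_scale_index[OF \<open>0 < h\<close> \<open>h < 1\<close> \<open>0 < \<kappa>\<close>] by blast
  have "\<forall>\<^sub>F t in at_top. \<phi> t e \<le> G (scale_index h \<kappa> t)"
    using eventually_ge_at_top[of 0]
  proof eventually_elim
    case (elim t)
    show ?case
      unfolding G_def using assms \<open>0 < \<kappa>\<close> elim
      by (intro barriers_near_value_bound[OF barriers _ _ _ _ m c c_pos C1 mass energy elim
          scale_index_gt scale_index_le]) auto
  qed
  then show ?thesis
    by (intro tendsto_sandwich[OF _ _ tendsto_const G_lim]) (auto simp: nonneg)
qed

section \<open>Barriers provided by the step function\<close>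

lemma The_strict_mono_interval:
  fixes x :: "nat \<Rightarrow> 'a::linorder"
  assumes "strict_mono x" "x k \<le> r" "r < x (Suc k)"
  shows "(THE n. x n \<le> r \<and> r < x (Suc n)) = k"
proof (rule the_equality)
  fix n assume n: "x n \<le> r \<and> r < x (Suc n)"
  have "\<not> Suc n \<le> k" "\<not> Suc k \<le> n"
    using n assms by (auto dest: strict_mono_less_eq[OF assms(1), THEN iffD2])
  then show "n = k" by linarith
qed (use assms in auto)

lemma strict_mono_interval_exists:
  fixes x :: "nat \<Rightarrow> 'a::linorder_topology"
  assumes "x \<longlonglongrightarrow> a" "x 0 \<le> r" "r < a"
  shows "\<exists>k. x k \<le> r \<and> r < x (Suc k)"
proof -
  have "\<exists>k. r < x k"
    using order_tendstoD(1)[OF assms(1,3)] by (auto simp: eventually_sequentially)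
  then obtain k where k: "r < x (Suc k)" "\<not> r < x k"
    using exists_least_lemma[of "\<lambda>k. r < x k"] assms(2) by (auto simp: not_less)
  then show ?thesis by (auto simp: not_less)
qed

lemma xseq_Suc [simp]:
  "xseq \<delta> \<alpha> \<beta> l (Suc n) = xseq \<delta> \<alpha> \<beta> l n + (\<alpha> ^ (Suc n + l) + \<beta> ^ (Suc n + l))"
  by (simp add: xseq_def)

lemma xseq_eq_partial_sum:
  "xseq \<delta> \<alpha> \<beta> l n = \<delta> + (\<Sum>i<n. \<alpha> ^ (Suc i + l) + \<beta> ^ (Suc i + l))"
  by (induction n) (simp_all add: xseq_def)

locale mtilde_profile =
  fixes a \<delta> h \<alpha> \<beta> \<nu> :: real and l :: nat
  assumes \<delta>_pos: "0 < \<delta>" and \<delta>_less: "\<delta> < a" and h_pos: "0 < h" and h_less: "h < \<alpha>"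
    and \<alpha>_less: "\<alpha> < \<beta>" and \<beta>_less: "\<beta> < 1" and \<nu>_gt: "1 < \<nu>"
    and gaps_sum: "(\<lambda>i. \<alpha> ^ (Suc i + l) + \<beta> ^ (Suc i + l)) sums (a - \<delta>)"
begin

abbreviation "x \<equiv> xseq \<delta> \<alpha> \<beta> l"
abbreviation "y \<equiv> yseq \<delta> \<alpha> \<beta> l"

lemma \<alpha>_pos: "0 < \<alpha>" and \<beta>_pos: "0 < \<beta>"
  using h_pos h_less \<alpha>_less by linarith+

lemma strict_mono_x: "strict_mono x"
  by (rule strict_monoI_Suc) (simp add: \<alpha>_pos \<beta>_pos add_pos_pos)

lemma x_0: "x 0 = \<delta>"
  by (simp add: xseq_def)

lemma x_ge: "\<delta> \<le> x n"
  using strict_mono_less_eq[OF strict_mono_x, of 0 n] by (simp add: x_0)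

lemma x_le_y: "x n \<le> y n" and y_less_x_Suc: "y n < x (Suc n)"
  by (simp_all add: yseq_def \<alpha>_pos \<beta>_pos less_imp_le)

lemma x_tendsto: "x \<longlonglongrightarrow> a"
  using tendsto_add[OF tendsto_const[of \<delta>] gaps_sum[unfolded sums_def]]
  by (simp add: xseq_eq_partial_sum[abs_def])

lemma a_minus_x_bounds: "0 < a - x n \<and> a - x n \<le> 2 / (1 - \<beta>) * \<beta> ^ n"
proof -
  define g where "g i = \<alpha> ^ (Suc i + l) + \<beta> ^ (Suc i + l)" for i
  have tail: "(\<lambda>i. g (i + n)) sums (a - x n)"
    using sums_split_initial_segment[OF gaps_sum, of n] by (simp add: g_def xseq_eq_partial_sum algebra_simps)
  have "0 < g i" for i by (simp add: g_def \<alpha>_pos \<beta>_pos add_pos_pos)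
  then have "0 < a - x n"
    using tail by (metis sums_summable sums_unique suminf_pos)
  have "g (i + n) \<le> 2 * \<beta> ^ n * \<beta> ^ i" for i
  proof -
    have "\<alpha> ^ (Suc (i + n) + l) \<le> \<beta> ^ (Suc (i + n) + l)"
      using \<alpha>_pos \<alpha>_less by (intro power_mono) auto
    moreover have "\<beta> ^ (Suc (i + n) + l) \<le> \<beta> ^ (i + n)"
      using \<beta>_pos \<beta>_less by (intro power_decreasing) auto
    ultimately have "g (i + n) \<le> 2 * \<beta> ^ (i + n)" unfolding g_def by linarith
    then show ?thesis by (simp add: power_add mult_ac)
  qed
  then have "a - x n \<le> 2 * \<beta> ^ n * (1 / (1 - \<beta>))"
    using sums_le[OF _ tail sums_mult[OF geometric_sums]] \<beta>_pos \<beta>_less by auto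
  with \<open>0 < a - x n\<close> show ?thesis by simp
qed

lemma mtilde_on_interval:
  assumes "x k \<le> r" "r < x (Suc k)"
  shows "mtilde a b \<delta> h \<alpha> \<beta> \<nu> l r = (if r < y k then - (h ^ k) else \<nu> * h ^ k)"
proof -
  have "r \<in> {\<delta>..<a}"
    using assms x_ge[of k] a_minus_x_bounds[of "Suc k"] by auto
  then show ?thesis
    using The_strict_mono_interval[OF strict_mono_x assms]
    by (simp add: mtilde_def mtilde_left_def Let_def)
qed

lemma mtilde_plateau:
  assumes "r \<in> {y n..<x (Suc n)}"
  shows "mtilde a b \<delta> h \<alpha> \<beta> \<nu> l r = \<nu> * h ^ n"
  using assms x_le_y[of n] mtilde_on_interval[of n r] by auto

lemma mtilde_lower_bound:
  assumes "r \<in> {y n..<a}"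
  shows "- (h ^ Suc n) \<le> mtilde a b \<delta> h \<alpha> \<beta> \<nu> l r"
proof -
  have "x 0 \<le> r"
    using assms x_ge[of n] x_le_y[of n] by (simp add: x_0)
  then obtain k where k: "x k \<le> r" "r < x (Suc k)"
    using strict_mono_interval_exists[OF x_tendsto] assms by auto
  have "n \<le> k"
    using k assms x_le_y[of n] strict_mono_less_eq[OF strict_mono_x, of "Suc k" n] by auto
  then consider "k = n" | "Suc n \<le> k" by linarith
  then show ?thesis
  proof cases
    case 1
    have "0 \<le> h ^ Suc n" "0 \<le> \<nu> * h ^ n" using h_pos \<nu>_gt by simp_all
    then show ?thesis using 1 assms mtilde_on_interval[OF k] by auto
  next
    case 2
    then have "h ^ k \<le> h ^ Suc n"
      using h_pos h_less \<alpha>_less \<beta>_less by (intro power_decreasing) auto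
    moreover have "0 \<le> h ^ Suc n" "0 \<le> \<nu> * h ^ k" using h_pos \<nu>_gt by simp_all
    ultimately show ?thesis using mtilde_on_interval[OF k] by (auto simp del: power_Suc)
  qed
qed

lemma barriers_near_a:
  assumes ge: "\<forall>r\<in>{\<delta>..a}. mtilde a b \<delta> h \<alpha> \<beta> \<nu> l r \<le> m r" and "m a = 0" and "a \<le> 1 - \<delta>"
  shows "barriers_near m a \<delta> h \<nu> \<beta> (\<beta> ^ Suc l / 2) (2 / (1 - \<beta>))"
  unfolding barriers_near_def
proof
  fix n
  define v where "v = (y n + x (Suc n)) / 2"
  have "x n \<le> y n" "y n < x (Suc n)" "x (Suc n) < a" "\<delta> \<le> x n"
    using x_le_y[of n] y_less_x_Suc[of n] a_minus_x_bounds[of "Suc n"] x_ge[of n] by auto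
  then have yv: "y n < v" "v < x (Suc n)" "x (Suc n) < a" "\<delta> \<le> y n"
    by (auto simp: v_def)
  have gap: "\<beta> ^ Suc l / 2 * \<beta> ^ n \<le> v - y n"
    by (simp add: v_def yseq_def field_simps power_add)
  have width: "a - y n \<le> 2 / (1 - \<beta>) * \<beta> ^ n"
    using a_minus_x_bounds[of n] x_le_y[of n] by linarith
  have plateau: "\<forall>r\<in>{y n..v}. \<nu> * h ^ n \<le> m r"
  proof
    fix r assume r: "r \<in> {y n..v}"
    then have "r \<in> {\<delta>..a}" "r \<in> {y n..<x (Suc n)}" using yv by auto
    then show "\<nu> * h ^ n \<le> m r" using ge mtilde_plateau[of r n b] by force
  qed
  have floor: "\<forall>r\<in>{y n..a}. - (h ^ Suc n) \<le> m r"
  proof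
    fix r assume r: "r \<in> {y n..a}"
    show "- (h ^ Suc n) \<le> m r"
    proof (cases "r = a")
      case True
      then show ?thesis using \<open>m a = 0\<close> h_pos by simp
    next
      case False
      then have "r \<in> {y n..<a}" "r \<in> {\<delta>..a}" using r yv by auto
      then show ?thesis using ge mtilde_lower_bound[of r n b] by (meson order_trans)
    qed
  qed
  have sets: "{y n..v} \<subseteq> {y n..a}" "a \<in> {y n..a}" "{y n..a} \<subseteq> {\<delta>..1 - \<delta>}"
    using yv \<open>a \<le> 1 - \<delta>\<close> by auto
  show "\<exists>u v j k. \<beta> ^ Suc l / 2 * \<beta> ^ n \<le> v - u \<and> {u..v} \<subseteq> {j..k} \<and> a \<in> {j..k} \<and>
      {j..k} \<subseteq> {\<delta>..1 - \<delta>} \<and> k - j \<le> 2 / (1 - \<beta>) * \<beta> ^ n \<and> (\<forall>r\<in>{u..v}. \<nu> * h ^ n \<le> m r) \<and>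
      (\<forall>r\<in>{j..k}. - (h ^ Suc n) \<le> m r)"
    by (rule exI[of _ "y n"], rule exI[of _ v], rule exI[of _ "y n"], rule exI[of _ a])
       (intro conjI sets gap width plateau floor)
qed

end

section \<open>Boundedness of the principal eigenvalue\<close>

lemma energy_nonneg:
  assumes "\<forall>r\<in>{0..1}. c r > 0"
  shows "0 \<le> energy d m c t \<phi> \<phi>'"
proof -
  have "0 \<le> weight d m t r * ((\<phi>' r)\<^sup>2 + c r * (\<phi> r)\<^sup>2)" if "r \<in> {0..1}" for r
    using assms that
    by (intro mult_nonneg_nonneg add_nonneg_nonneg weight_nonneg) (auto intro: less_imp_le)
  then show ?thesis
    unfolding energy_eq_weight
    by (cases "(\<lambda>r. weight d m t r * ((\<phi>' r)\<^sup>2 + c r * (\<phi> r)\<^sup>2)) integrable_on {0..1}")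
       (auto intro: integral_nonneg simp: not_integrable_integral)
qed

lemma lam_le_energy:
  assumes "\<forall>r\<in>{0..1}. c r > 0" "C1_on {0..1} \<phi> \<phi>'" "mass d m t \<phi> = 1"
  shows "lam d m c t \<le> energy d m c t \<phi> \<phi>'"
  unfolding lam_def
proof (rule cInf_lower)
  show "bdd_below {energy d m c t \<phi> \<phi>' |\<phi> \<phi>'. C1_on {0..1} \<phi> \<phi>' \<and> mass d m t \<phi> = 1}"
    using energy_nonneg[OF assms(1)] by (intro bdd_belowI[of _ 0]) auto
qed (use assms in blast)

definition bump :: "real \<Rightarrow> real \<Rightarrow> real \<Rightarrow> real" where
  "bump a b r = (if r \<in> {a..b} then ((r - a) * (b - r))\<^sup>2 else 0)"

definition bump_deriv :: "real \<Rightarrow> real \<Rightarrow> real \<Rightarrow> real" where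
  "bump_deriv a b r = (if r \<in> {a..b} then 2 * ((r - a) * (b - r)) * ((b - r) - (r - a)) else 0)"

lemma bump_has_real_derivative:
  assumes "a < b"
  shows "(bump a b has_real_derivative bump_deriv a b x) (at x)"
proof -
  have poly: "((\<lambda>r. ((r - a) * (b - r))\<^sup>2) has_vector_derivative
      2 * ((y - a) * (b - y)) * ((b - y) - (y - a))) (at y within U)" for y U
    unfolding has_real_derivative_iff_has_vector_derivative[symmetric]
    by (rule derivative_eq_intros refl | simp add: algebra_simps)+
  have boundary: "closure {a..b} \<inter> closure (- {a..b}) \<subseteq> {a, b}"
    by (auto simp: closure_complement)
  have "(bump a b has_vector_derivative bump_deriv a b x) (at x within UNIV)"
    unfolding bump_def bump_deriv_def
  proof (rule has_vector_derivative_If_within_closures[where T = "- {a..b}"])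
    show "((\<lambda>r. 0) has_vector_derivative 0) (at x within - {a..b} \<union> closure {a..b} \<inter> closure (- {a..b}))"
      by (rule has_vector_derivative_const)
  next
    assume "x \<in> closure {a..b}" "x \<in> closure (- {a..b})"
    then have "x = a \<or> x = b" using boundary by auto
    then show "((x - a) * (b - x))\<^sup>2 = 0" "2 * ((x - a) * (b - x)) * (b - x - (x - a)) = 0"
      by auto
  qed (use poly in auto)
  then show ?thesis
    by (simp add: has_real_derivative_iff_has_vector_derivative)
qed

lemma continuous_on_bump_deriv: "continuous_on S (bump_deriv a b)"
proof -
  have clamp: "bump_deriv a b x = (let y = max a (min b x) in 2 * ((y - a) * (b - y)) * ((b - y) - (y - a)))"
    for x
    by (cases "x \<in> {a..b}") (auto simp: bump_deriv_def Let_def max_def min_def)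
  show ?thesis
    unfolding clamp[abs_def] Let_def by (intro continuous_intros)
qed

lemma C1_on_bump: "a < b \<Longrightarrow> C1_on S (bump a b) (bump_deriv a b)"
  unfolding C1_on_def
  using bump_has_real_derivative has_field_derivative_at_within continuous_on_bump_deriv by blast

lemma bump_eq_0:
  assumes "r \<notin> {a..b}"
  shows "bump a b r = 0 \<and> bump_deriv a b r = 0"
  using assms by (simp add: bump_def bump_deriv_def del: atLeastAtMost_iff)

lemma integral_weighted_bump_pos:
  assumes "0 \<le> a" "a < b" "b \<le> 1"
  shows "0 < integral {0..1} (\<lambda>r. r ^ (d - 1) * (bump a b r)\<^sup>2)"
proof -
  let ?F = "\<lambda>r. r ^ (d - 1) * (bump a b r)\<^sup>2"
  have cont: "continuous_on {0..1} ?F"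
    using bump_has_real_derivative[OF \<open>a < b\<close>]
    by (intro continuous_intros continuous_at_imp_continuous_on) (auto intro: DERIV_isCont)
  have nonneg: "0 \<le> ?F r" if "r \<in> {0..1}" for r
    using that by simp
  have "?F ((a + b) / 2) \<noteq> 0"
    using assms by (simp add: bump_def)
  then have "\<not> (?F has_integral 0) (cbox 0 1)"
    using has_integral_0_cbox_imp_0[of 0 1 ?F "(a + b) / 2"] cont nonneg assms by auto
  moreover have "(?F has_integral integral {0..1} ?F) (cbox 0 1)"
    using integrable_continuous_interval[OF cont] by (simp add: integrable_integral)
  moreover have "0 \<le> integral {0..1} ?F"
    using nonneg by (intro integral_nonneg integrable_continuous_interval cont) auto
  ultimately show ?thesis
    by (metis less_eq_real_def)
qed

lemma lam_bounded_above:
  assumes "0 \<le> a" "a < b" "b \<le> 1"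
    and m0: "\<forall>r\<in>{a..b}. m r = 0" and c_pos: "\<forall>r\<in>{0..1}. c r > 0"
  shows "\<exists>L. \<forall>t. lam d m c t \<le> L"
proof -
  define M where "M = integral {0..1} (\<lambda>r. r ^ (d - 1) * (bump a b r)\<^sup>2)"
  have "0 < M"
    unfolding M_def using assms(1-3) by (rule integral_weighted_bump_pos)
  define \<phi> where "\<phi> r = bump a b r / sqrt M" for r
  define \<phi>' where "\<phi>' r = bump_deriv a b r / sqrt M" for r
  have C1: "C1_on {0..1} \<phi> \<phi>'"
    unfolding C1_on_def \<phi>_def[abs_def] \<phi>'_def[abs_def]
  proof
    show "\<forall>x\<in>{0..1}. ((\<lambda>r. bump a b r / sqrt M) has_real_derivative bump_deriv a b x / sqrt M)
        (at x within {0..1})"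
      using C1_on_bump[OF \<open>a < b\<close>, of "{0..1}"] by (auto simp: C1_on_def intro: DERIV_cdivide)
    show "continuous_on {0..1} (\<lambda>r. bump_deriv a b r / sqrt M)"
      using \<open>0 < M\<close> by (intro continuous_intros continuous_on_bump_deriv) auto
  qed
  have weight_eq: "weight d m t r * f r = r ^ (d - 1) * f r"
    if "r \<notin> {a..b} \<Longrightarrow> f r = 0" for f :: "real \<Rightarrow> real" and t r
    using that m0 by (cases "r \<in> {a..b}") (auto simp: weight_def)
  have mass: "mass d m t \<phi> = 1" for t
  proof -
    have "mass d m t \<phi> = integral {0..1} (\<lambda>r. r ^ (d - 1) * (bump a b r)\<^sup>2 / M)"
      unfolding mass_eq_weight
      by (subst weight_eq) (auto simp: \<phi>_def bump_eq_0 power_divide \<open>0 < M\<close> less_imp_le)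
    also have "\<dots> = M / M"
      by (simp add: integral_divide M_def)
    finally show ?thesis using \<open>0 < M\<close> by simp
  qed
  define E where "E = integral {0..1}
      (\<lambda>r. r ^ (d - 1) * ((\<phi>' r)\<^sup>2 + c r * (\<phi> r)\<^sup>2))"
  have "energy d m c t \<phi> \<phi>' = E" for t
    unfolding energy_eq_weight E_def
    by (subst weight_eq) (auto simp: \<phi>_def \<phi>'_def bump_eq_0)
  then have "lam d m c t \<le> E" for t
    using lam_le_energy[OF c_pos C1 mass] by metis
  then show ?thesis by blast
qed

theorem lemma3p4:
  fixes d :: nat and a b :: real and m m' c :: "real \<Rightarrow> real"
    and phi1 dphi1 :: "real \<Rightarrow> real \<Rightarrow> real"
    and s :: "nat \<Rightarrow> real" and phistar :: "real \<Rightarrow> real"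
  assumes d: "d \<ge> 1"
    and ab: "0 < a" "a < b" "b < 1" "a + b = 1"
    and m_C1: "C1_on {0..1} m m'"
    and m_nonconst: "\<exists>x\<in>{0..1}. \<exists>y\<in>{0..1}. m x \<noteq> m y"
    and c_cont: "continuous_on {0..1} c"
    and H1: "\<forall>r\<in>{0..1}. m r = m (1 - r)" "\<forall>r\<in>{a..b}. m r = 0"
    and H2: "\<forall>r\<in>{0..1}. c r > 0" "\<forall>r\<in>{0..a} \<union> {b..1}. c r > lamD d c a b"
    and SD: "in_SD a b m m'"
    and phi1: "\<And>t. C1_on {0..1} (phi1 t) (dphi1 t)"
      "\<And>t. \<forall>r\<in>{0..1}. phi1 t r > 0"
      "\<And>t. mass d m t (phi1 t) = 1"
      "\<And>t. energy d m c t (phi1 t) (dphi1 t) = lam d m c t"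
    and s_lim: "filterlim s at_top sequentially"
    and lam_lim: "(\<lambda>i. ereal (lam d m c (s i))) \<longlonglongrightarrow> Liminf at_top (\<lambda>t. ereal (lam d m c t))"
    and phi_lim: "uniform_limit {a..b} (\<lambda>i. phi1 (s i)) phistar sequentially"
  shows "phistar a = 0 \<and> phistar b = 0"
\<comment> \<open>Only the upper bound on lambda enters: phi_1(t; a) and phi_1(t; b) tend to 0 along every
  t \<rightarrow> \<infinity>.\<close>
proof -
  obtain \<delta> h \<alpha> \<beta> \<nu> l where params: "mtilde_profile a \<delta> h \<alpha> \<beta> \<nu> l"
    and m_ge: "\<forall>r\<in>{\<delta>..a} \<union> {b..1 - \<delta>}. m r \<ge> mtilde a b \<delta> h \<alpha> \<beta> \<nu> l r"
    using SD unfolding in_SD_def mtilde_profile_def by blast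
  interpret mtilde_profile a \<delta> h \<alpha> \<beta> \<nu> l by (rule params)
  let ?barriers = "\<lambda>e. barriers_near m e \<delta> h \<nu> \<beta> (\<beta> ^ Suc l / 2) (2 / (1 - \<beta>))"
  have barriers_a: "?barriers a"
    using m_ge H1(2) ab \<delta>_less by (intro barriers_near_a) auto
  have "b = 1 - a" using ab by simp
  then have barriers_b: "?barriers b"
    using barriers_near_reflect[OF H1(1) \<delta>_pos barriers_a] by simp
  obtain \<Lambda> where \<Lambda>: "\<And>t. lam d m c t \<le> \<Lambda>"
    using lam_bounded_above[of a b m c d] ab H1(2) H2(1) by auto
  have m_cont: "continuous_on {0..1} m"
    using m_C1 unfolding C1_on_def by (intro DERIV_continuous_on) auto
  have decay: "((\<lambda>t. phi1 t e) \<longlongrightarrow> 0) at_top" if "?barriers e" "e \<in> {0..1}" for e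
  proof (rule barriers_near_decay[OF that(1) \<delta>_pos h_pos _ \<beta>_pos \<beta>_less \<nu>_gt _ m_cont c_cont H2(1) phi1(1,3)])
    show "h < 1" "0 < \<beta> ^ Suc l / 2"
      using h_less \<alpha>_less \<beta>_pos \<beta>_less by simp_all
    show "energy d m c t (phi1 t) (dphi1 t) \<le> \<Lambda>" for t
      using phi1(4) \<Lambda> by simp
    show "0 \<le> phi1 t e" for t
      using phi1(2) that(2) less_imp_le by blast
  qed
  have "phistar e = 0" if "e = a \<or> e = b" for e
  proof (rule LIMSEQ_unique)
    show "(\<lambda>i. phi1 (s i) e) \<longlonglongrightarrow> phistar e"
      using that ab by (intro tendsto_uniform_limitI[OF phi_lim]) auto
    show "(\<lambda>i. phi1 (s i) e) \<longlonglongrightarrow> 0"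
      using decay barriers_a barriers_b that ab by (intro filterlim_compose[OF _ s_lim]) auto
  qed
  then show ?thesis by blast
qed

end
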